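(* In the setting below, for $n$ participants, the protocol consisting of the setup phase, the merged round and the recovery round is correct, i.e. at the end every participant's balance is $0$ (and the shared address is empty), and, apart from the setup, it uses exactly $2\cdot n+1$ transactions.
   Context: Setting (Conspiracy Santa). There are $n$ participants $P_1,\dots,P_n$. For each participant, the other $n-1$ participants form a group, choose a gift for him, one or more of them buy it, and its value is shared equally among the group members (more generally, expenses are shared within exchange groups). All participants know a fixed integer upper bound $B>0$ (in cents) on the value of any gift. Setup phase: payments in each group are broadcast within the group; each member computes the in-group share (group total divided by group size); each participant sums his in-group shares and subtracts his own expenses, obtaining his balance $p_i$, an integer number of cents (shares may be unevenly split up to one cent). Thus $\sum_i p_i=0$; $p_i>0$ means $P_i$ owes money, $p_i<0$ means $P_i$ is owed money. Sending $x$ cents decreases the sender's balance by $x$ and increases the receiver's by $x$. Participants create anonymous cryptocurrency addresses and one shared anonymous address (piggy bank) whose key all know. $x\bmod B\in\{0,\dots,B-1\}$. Merged round (private transactions on secure channels, except the last): $P_1$ samples $t_1$ uniformly in $\{0,\dots,B-1\}$, sets $p_1\leftarrow p_1-1-t_1$, sends $1+t_1$ cents to $P_2$, who adds it to $p_2$. For $i=2,\dots,n$: $P_i$ sets $t_i=(p_i-1)\bmod B$, sets $p_i\leftarrow p_i-1-t_i-(i-1)B$ and sends $1+t_i+(i-1)B$ cents to $P_{i+1}$ (where $P_{n+1}=P_1$), who adds it to his balance. Finally $P_1$ sends $nB$ cents to the shared address (a public transaction), updating his balance accordingly. Recovery round: every $P_i$ with $p_i<0$ makes, $-p_i/B$ times,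 the shared address pay $B$ cents to one of his own (distinct) anonymous addresses, then sets $p_i\leftarrow 0$.
   Formalization: The balances $p_i$ entering the merged round are arbitrary integers with $\sum_i p_i=0$ and each $p_i$ at most B, instead of balances computed by the setup phase with shares split unevenly up to one cent. Apart from conventions, each condition added here is assumed in the paper as well or is needed for the statement above to hold. *)

theory Defs
  imports Main
begin

text \<open>Participants are P_1,...,P_n, indexed by the naturals 1..n.  A state consists of
  the balances of the participants (in cents) and the content of the shared address
  (piggy bank).\<close>

type_synonym state = "(nat \<Rightarrow> int) \<times> int"

text \<open>Transactions: a private transfer from one participant to another, a deposit of a
  participant to the shared address (public), and a withdrawal from the shared address
  to an anonymous address of a participant.\<close>

datatype tx = Priv nat nat int | Deposit nat int | Withdraw nat int

fun apply_tx :: "tx \<Rightarrow> state \<Rightarrow> state" where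
  "apply_tx (Priv a b x) (p, s) =
     (let q = p(a := p a - x) in (q(b := q b + x), s))"
| "apply_tx (Deposit a x) (p, s) = (p(a := p a - x), s + x)"
| "apply_tx (Withdraw b x) (p, s) = (p(b := p b + x), s - x)"

definition run :: "tx list \<Rightarrow> state \<Rightarrow> state" where
  "run txs st = fold apply_tx txs st"

fun merged_loop :: "int \<Rightarrow> nat \<Rightarrow> nat \<Rightarrow> nat \<Rightarrow> state \<Rightarrow> tx list" where
  "merged_loop B n i 0 st = []"
| "merged_loop B n i (Suc k) st =
     (let t = (fst st i - 1) mod B;
          tr = Priv i (if i = n then 1 else i + 1) (1 + t + int (i - 1) * B)
      in tr # merged_loop B n (i + 1) k (apply_tx tr st))"

definition merged_round :: "int \<Rightarrow> nat \<Rightarrow> int \<Rightarrow> state \<Rightarrow> tx list" where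
  "merged_round B n t1 st =
     (let tr1 = Priv 1 2 (1 + t1)
      in tr1 # merged_loop B n 2 (n - 1) (apply_tx tr1 st) @ [Deposit 1 (int n * B)])"

definition recovery_round :: "int \<Rightarrow> nat \<Rightarrow> (nat \<Rightarrow> int) \<Rightarrow> tx list" where
  "recovery_round B n p =
     concat (map (\<lambda>i. if p i < 0 then replicate (nat ((- p i) div B)) (Withdraw i B) else [])
                 [1..<n + 1])"

text \<open>Whole protocol after the setup phase, starting from the setup balances p and an
  empty shared address; t1 is P_1's random choice.\<close>

definition protocol :: "int \<Rightarrow> nat \<Rightarrow> int \<Rightarrow> (nat \<Rightarrow> int) \<Rightarrow> tx list" where
  "protocol B n t1 p =
     (let txs1 = merged_round B n t1 (p, 0);
          st1 = run txs1 (p, 0)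
      in txs1 @ recovery_round B n (fst st1))"

end

theory Submission
  imports Defs
begin

text \<open>In the merged round P_i (i \<ge> 2) receives 1 + t_(i-1) + (i-2)B and passes on
  1 + t_i + (i-1)B with t_i \<equiv> p_i + t_(i-1) (mod B), so he ends with
  p_i + t_(i-1) - t_i - B: a multiple of B which is less than B because p_i \<le> B, hence a
  nonpositive multiple of B.  P_1 ends with p_1 - t_1 + t_n - B < B, and since the shared
  address holds nB, all balances add up to -nB; so P_1's balance is a nonpositive multiple of
  B as well.  The recovery round therefore zeroes every balance with exactly n withdrawals of
  B, which empties the shared address; together with the n + 1 transactions of the merged
  round this makes 2n + 1.\<close>

lemma run_Nil [simp]: "run [] st = st"
  by (simp add: run_def)

lemma run_Cons [simp]: "run (tx # txs) st = run txs (apply_tx tx st)"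
  by (simp add: run_def)

lemma run_append [simp]: "run (txs @ txs') st = run txs' (run txs st)"
  by (simp add: run_def)

lemma run_replicate_Withdraw:
  "run (replicate m (Withdraw i x)) (q, s) = (q(i := q i + int m * x), s - int m * x)"
  by (induction m arbitrary: q s) (simp_all add: fun_eq_iff algebra_simps)

lemma int_nat_neg_div_mult:
  fixes x B :: int
  assumes "0 < B" and "B dvd x" and "x \<le> 0"
  shows "int (nat (- x div B)) * B = - x"
proof -
  obtain c where c: "x = B * c" using assms(2) ..
  then have "- x div B = - c" using assms(1) by (simp flip: mult_minus_right)
  moreover have "c \<le> 0" using c assms(1,3) by (simp add: mult_le_0_iff)
  ultimately show ?thesis using c by simp
qed

lemma recovery_round_Suc:
  assumes "0 < B"
  shows "recovery_round B (Suc n) p =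
           recovery_round B n p @ replicate (nat (- p (Suc n) div B)) (Withdraw (Suc n) B)"
proof -
  have "nat (- p (Suc n) div B) = 0" if "\<not> p (Suc n) < 0"
    using that assms by (simp add: div_nonpos_pos_le0)
  then show ?thesis by (simp add: recovery_round_def)
qed

lemma run_recovery_round:
  assumes "0 < B" and "\<forall>i \<in> {1..n}. B dvd p i \<and> p i \<le> 0"
  shows "run (recovery_round B n p) (p, s) =
           ((\<lambda>j. if j \<in> {1..n} then 0 else p j), s + (\<Sum>i = 1..n. p i))"
  using assms(2)
proof (induction n)
  case 0
  then show ?case by (simp add: recovery_round_def)
next
  case (Suc n)
  define m where "m = nat (- p (Suc n) div B)"
  have "int m * B = - p (Suc n)"
    unfolding m_def using Suc.prems by (intro int_nat_neg_div_mult assms(1)) auto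
  with Suc show ?case
    by (simp add: recovery_round_Suc[OF assms(1), of n p, folded m_def]
        run_replicate_Withdraw fun_eq_iff)
qed

lemma length_recovery_round:
  assumes "0 < B" and "\<forall>i \<in> {1..n}. B dvd p i \<and> p i \<le> 0"
  shows "int (length (recovery_round B n p)) * B = - (\<Sum>i = 1..n. p i)"
  using assms(2)
proof (induction n)
  case 0
  then show ?case by (simp add: recovery_round_def)
next
  case (Suc n)
  define m where "m = nat (- p (Suc n) div B)"
  have "int m * B = - p (Suc n)"
    unfolding m_def using Suc.prems by (intro int_nat_neg_div_mult assms(1)) auto
  with Suc show ?case
    by (simp add: recovery_round_Suc[OF assms(1), of n p, folded m_def] algebra_simps)
qed

fun merged_t :: "int \<Rightarrow> (nat \<Rightarrow> int) \<Rightarrow> int \<Rightarrow> nat \<Rightarrow> int" where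
  "merged_t B p t1 0 = t1"
| "merged_t B p t1 (Suc 0) = t1"
| "merged_t B p t1 (Suc (Suc i)) = (p (Suc (Suc i)) + merged_t B p t1 (Suc i)) mod B"

lemma merged_t_step: "2 \<le> i \<Longrightarrow> merged_t B p t1 i = (p i + merged_t B p t1 (i - 1)) mod B"
  by (auto simp: le_iff_add numeral_2_eq_2)

lemma merged_t_bounds: "0 \<le> t1 \<Longrightarrow> t1 < B \<Longrightarrow> 0 \<le> merged_t B p t1 i \<and> merged_t B p t1 i < B"
  by (induction B p t1 i rule: merged_t.induct) auto

definition merged_balance :: "int \<Rightarrow> nat \<Rightarrow> (nat \<Rightarrow> int) \<Rightarrow> int \<Rightarrow> nat \<Rightarrow> int" where
  "merged_balance B n p t1 j =
     (if j = 1 then p 1 - t1 + merged_t B p t1 n - B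
      else if 2 \<le> j \<and> j \<le> n then p j + merged_t B p t1 (j - 1) - merged_t B p t1 j - B
      else p j)"

lemma length_merged_loop: "length (merged_loop B n i k st) = k"
  by (induction k arbitrary: i st) (simp_all add: Let_def)

lemma length_merged_round: "1 \<le> n \<Longrightarrow> length (merged_round B n t1 st) = n + 1"
  by (simp add: merged_round_def Let_def length_merged_loop)

lemma run_merged_loop:
  assumes "2 \<le> i" "i \<le> n" "i + k = n + 1"
    and "q i = p i + 1 + merged_t B p t1 (i - 1) + int (i - 2) * B"
    and "\<forall>j. i < j \<and> j \<le> n \<longrightarrow> q j = p j"
  shows "run (merged_loop B n i k (q, s)) (q, s) =
    ((\<lambda>j. if i \<le> j \<and> j \<le> n then merged_balance B n p t1 j
          else if j = 1 then q 1 + 1 + merged_t B p t1 n + int (n - 1) * B else q j), s)"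
  using assms
proof (induction k arbitrary: i q)
  case 0
  then show ?case by simp
next
  case (Suc k)
  let ?T = "merged_t B p t1"
  let ?x = "1 + ?T i + int (i - 1) * B"
  have "q i - 1 = p i + ?T (i - 1) + int (i - 2) * B"
    using Suc.prems(4) by simp
  then have t: "(q i - 1) mod B = ?T i"
    by (simp only: mod_mult_self1 merged_t_step[OF Suc.prems(1)])
  have bal: "q i - ?x = merged_balance B n p t1 i"
    using Suc.prems(1,2,4) by (simp add: merged_balance_def algebra_simps)
  show ?case
  proof (cases k)
    case 0
    then have "i = n" using Suc.prems by simp
    have "merged_loop B n i (Suc k) (q, s) = [Priv n 1 ?x]"
      using 0 \<open>i = n\<close> t by (simp add: Let_def)
    then show ?thesis using \<open>i = n\<close> Suc.prems(1) bal by (auto simp: fun_eq_iff)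
  next
    case (Suc k')
    then have "i < n" using Suc.prems by simp
    define q' where "q' = q(i := q i - ?x, i + 1 := q (i + 1) + ?x)"
    have loop: "merged_loop B n i (Suc k) (q, s) =
        Priv i (i + 1) ?x # merged_loop B n (i + 1) k (q', s)"
      using \<open>i < n\<close> t by (simp add: Let_def q'_def)
    have "run (merged_loop B n (i + 1) k (q', s)) (q', s) =
      ((\<lambda>j. if i + 1 \<le> j \<and> j \<le> n then merged_balance B n p t1 j
          else if j = 1 then q' 1 + 1 + ?T n + int (n - 1) * B else q' j), s)"
      using Suc.prems \<open>i < n\<close> by (intro Suc.IH) (auto simp: q'_def algebra_simps)
    then show ?thesis
      unfolding loop using bal \<open>2 \<le> i\<close> \<open>i < n\<close> by (auto simp: q'_def fun_eq_iff)
  qed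
qed

lemma run_merged_round:
  assumes "2 \<le> n"
  shows "run (merged_round B n t1 (p, s)) (p, s) = (merged_balance B n p t1, s + int n * B)"
proof -
  define q where "q = p(1 := p 1 - (1 + t1), 2 := p 2 + (1 + t1))"
  have "run (merged_loop B n 2 (n - 1) (q, s)) (q, s) =
    ((\<lambda>j. if 2 \<le> j \<and> j \<le> n then merged_balance B n p t1 j
          else if j = 1 then q 1 + 1 + merged_t B p t1 n + int (n - 1) * B else q j), s)"
    using assms by (intro run_merged_loop) (auto simp: q_def)
  moreover have "merged_round B n t1 (p, s) =
      Priv 1 2 (1 + t1) # merged_loop B n 2 (n - 1) (q, s) @ [Deposit 1 (int n * B)]"
    by (simp add: merged_round_def q_def)
  ultimately show ?thesis
    using assms by (auto simp: fun_eq_iff q_def merged_balance_def algebra_simps)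
qed

lemma merged_balance_dvd:
  assumes "2 \<le> j" and "j \<le> n"
  shows "B dvd merged_balance B n p t1 j"
proof -
  let ?a = "p j + merged_t B p t1 (j - 1)"
  have "merged_balance B n p t1 j = ?a - ?a mod B - B"
    using assms by (simp add: merged_balance_def merged_t_step)
  also have "\<dots> = B * (?a div B - 1)"
    by (simp add: minus_mod_eq_mult_div algebra_simps)
  finally show ?thesis by simp
qed

lemma sum_merged_balance:
  assumes "2 \<le> n"
  shows "(\<Sum>j = 1..n. merged_balance B n p t1 j) = (\<Sum>j = 1..n. p j) - int n * B"
proof -
  let ?T = "merged_t B p t1"
  have split: "(\<Sum>j = 1..n. f j) = f 1 + (\<Sum>j = 2..n. f j)" for f :: "nat \<Rightarrow> int"
    using assms by (simp add: sum.atLeast_Suc_atMost numeral_2_eq_2)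
  have "(\<Sum>j = 2..n. merged_balance B n p t1 j) = (\<Sum>j = 2..n. p j - (?T j - ?T (j - 1)) - B)"
    by (rule sum.cong) (auto simp: merged_balance_def)
  also have "\<dots> = (\<Sum>j = 2..n. p j) - (\<Sum>j = Suc 1..n. ?T j - ?T (j - 1)) - (\<Sum>j = 2..n. B)"
    by (simp only: sum_subtractf numeral_2_eq_2 One_nat_def)
  also have "\<dots> = (\<Sum>j = 2..n. p j) - (?T n - t1) - int (n - 1) * B"
    using assms sum_telescope''[of 1 n ?T] by simp
  finally show ?thesis
    using assms split[of "merged_balance B n p t1"] split[of p]
    by (simp add: merged_balance_def algebra_simps)
qed

lemma merged_balance_less:
  assumes "0 \<le> t1" "t1 < B" and "1 \<le> j" "j \<le> n" and "p j \<le> B"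
  shows "merged_balance B n p t1 j < B"
  using assms merged_t_bounds[OF assms(1,2), of p n] merged_t_bounds[OF assms(1,2), of p j]
    merged_t_bounds[OF assms(1,2), of p "j - 1"]
  by (auto simp: merged_balance_def)

lemma merged_balance_nonpos_multiple:
  assumes "2 \<le> n" and "0 < B" and "(\<Sum>j = 1..n. p j) = 0"
    and "\<forall>j \<in> {1..n}. p j \<le> B" and "0 \<le> t1" "t1 < B"
  shows "\<forall>j \<in> {1..n}. B dvd merged_balance B n p t1 j \<and> merged_balance B n p t1 j \<le> 0"
proof
  fix j assume j: "j \<in> {1..n}"
  let ?F = "merged_balance B n p t1"
  have "B dvd ?F j"
  proof (cases "j = 1")
    case True
    have "(\<Sum>i = 1..n. ?F i) = ?F 1 + (\<Sum>i = 2..n. ?F i)"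
      using assms(1) by (simp add: sum.atLeast_Suc_atMost numeral_2_eq_2)
    then have "?F 1 = - (int n * B) - (\<Sum>i = 2..n. ?F i)"
      using sum_merged_balance[OF assms(1)] assms(3) by simp
    moreover have "B dvd (\<Sum>i = 2..n. ?F i)"
      by (intro dvd_sum) (simp add: merged_balance_dvd)
    ultimately show ?thesis using True by simp
  next
    case False
    with j show ?thesis by (simp add: merged_balance_dvd)
  qed
  moreover have "?F j < B"
    using j assms(4-6) by (intro merged_balance_less) auto
  ultimately show "B dvd ?F j \<and> ?F j \<le> 0"
    using zdvd_imp_le[of B "?F j"] by (meson not_le)
qed

theorem theorem4:
  fixes n :: nat and B t1 :: int and p :: "nat \<Rightarrow> int"
  assumes "2 \<le> n" and "0 < B"
    and "(\<Sum>i = 1..n. p i) = 0"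
    and "\<forall>i \<in> {1..n}. p i \<le> B"
    and "t1 \<in> {0..<B}"
  shows "(\<forall>i \<in> {1..n}. fst (run (protocol B n t1 p) (p, 0)) i = 0)
       \<and> snd (run (protocol B n t1 p) (p, 0)) = 0
       \<and> length (protocol B n t1 p) = 2 * n + 1"
proof -
  define F where "F = merged_balance B n p t1"
  have merged: "run (merged_round B n t1 (p, 0)) (p, 0) = (F, int n * B)"
    using run_merged_round[OF assms(1)] by (simp add: F_def)
  have protocol: "protocol B n t1 p = merged_round B n t1 (p, 0) @ recovery_round B n F"
    by (simp add: protocol_def merged)
  have F_sum: "(\<Sum>i = 1..n. F i) = - (int n * B)"
    using sum_merged_balance[OF assms(1)] assms(3) by (simp add: F_def)
  have F_nonpos: "\<forall>i \<in> {1..n}. B dvd F i \<and> F i \<le> 0"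
    using merged_balance_nonpos_multiple assms by (simp add: F_def)
  have "run (protocol B n t1 p) (p, 0) = ((\<lambda>j. if j \<in> {1..n} then 0 else F j), 0)"
    using run_recovery_round[OF assms(2) F_nonpos] F_sum by (simp add: protocol merged)
  moreover have "length (recovery_round B n F) = n"
    using length_recovery_round[OF assms(2) F_nonpos] F_sum assms(2) by simp
  ultimately show ?thesis
    using length_merged_round[of n] assms(1) by (simp add: protocol)
qed

end
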